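(* Let $(X,\mathrm{dist})$ be a metric space, $\mu$ a distribution on $X$, $\lambda>0$, $\gamma\ge1$. Let $g:X\times X\to\{0,1\}$ be any function with $g(x,z)=0$ whenever $\mathrm{dist}(x,z)\le\lambda$ and $g(x,z)=1$ whenever $\mathrm{dist}(x,z)>\gamma\lambda$ (arbitrary otherwise). If the $\lambda$-neighborhoods in $X$ are $(\Phi,\Psi)$-expanding under $\mu$, then $g$ contains no monochromatic $1$-rectangle $A\times B$ (i.e. $g(x,z)=1$ for all $x\in A$, $z\in B$) with $\mu(A)\ge\frac{1}{\Phi}$ and $\mu(B)\ge\frac{1.01}{\Psi}$.
   Context: $N_\lambda(x)=\{z\in X:\mathrm{dist}(x,z)\le\lambda\}$ and $N_\lambda(A)=\bigcup_{x\in A}N_\lambda(x)$. The $\lambda$-neighborhoods are $(\Phi,\Psi)$-expanding under $\mu$ if every $A\subseteq X$ with $\mu(A)\ge1/\Phi$ satisfies $\mu(N_\lambda(A))\ge1-1/\Psi$. *)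

theory Defs
  imports "HOL-Probability.Probability_Mass_Function"
begin

definition nbhd :: "real \<Rightarrow> 'a::metric_space \<Rightarrow> 'a set" where
  "nbhd lam x = {z. dist x z \<le> lam}"

definition nbhd_set :: "real \<Rightarrow> 'a::metric_space set \<Rightarrow> 'a set" where
  "nbhd_set lam A = (\<Union>x\<in>A. nbhd lam x)"

definition expanding :: "real \<Rightarrow> real \<Rightarrow> real \<Rightarrow> 'a::metric_space pmf \<Rightarrow> bool" where
  "expanding lam \<Phi> \<Psi> \<mu> \<longleftrightarrow>
     (\<forall>A. measure_pmf.prob \<mu> A \<ge> 1 / \<Phi> \<longrightarrow>
          measure_pmf.prob \<mu> (nbhd_set lam A) \<ge> 1 - 1 / \<Psi>)"

end

theory Submission
  imports Defs
begin

text \<open>A 1-rectangle \<open>A \<times> B\<close> forces every point of \<open>B\<close> to be more than \<open>lam\<close> away from \<open>A\<close>,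
  so \<open>B\<close> lies outside the \<open>lam\<close>-neighbourhood of \<open>A\<close>. If \<open>A\<close> is large, expansion leaves
  mass at most \<open>1 / \<Psi>\<close> for that complement, which is less than \<open>1.01 / \<Psi>\<close>.\<close>

lemma disjoint_nbhd_set_iff:
  "nbhd_set lam A \<inter> B = {} \<longleftrightarrow> (\<forall>x\<in>A. \<forall>z\<in>B. lam < dist x z)"
  unfolding nbhd_set_def nbhd_def by (force simp: not_le)

lemma prob_disjoint_add_le_1:
  assumes "A \<inter> B = {}"
  shows "measure_pmf.prob \<mu> A + measure_pmf.prob \<mu> B \<le> 1"
proof -
  have "measure_pmf.prob \<mu> A + measure_pmf.prob \<mu> B = measure_pmf.prob \<mu> (A \<union> B)"
    using assms by (simp add: measure_pmf.finite_measure_Union)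
  also have "\<dots> \<le> 1"
    by (rule measure_pmf.prob_le_1)
  finally show ?thesis .
qed

lemma expanding_prob_far_set_le:
  assumes "expanding lam \<Phi> \<Psi> \<mu>"
    and "measure_pmf.prob \<mu> A \<ge> 1 / \<Phi>"
    and "\<forall>x\<in>A. \<forall>z\<in>B. lam < dist x z"
  shows "measure_pmf.prob \<mu> B \<le> 1 / \<Psi>"
proof -
  have "measure_pmf.prob \<mu> (nbhd_set lam A) \<ge> 1 - 1 / \<Psi>"
    using assms(1,2) unfolding expanding_def by blast
  moreover have "measure_pmf.prob \<mu> (nbhd_set lam A) + measure_pmf.prob \<mu> B \<le> 1"
    using assms(3) by (intro prob_disjoint_add_le_1) (simp add: disjoint_nbhd_set_iff)
  ultimately show ?thesis
    by linarith
qed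

text \<open>Only the behaviour of \<open>g\<close> on close pairs matters; \<open>\<gamma>\<close> and the values of \<open>g\<close> on far
  pairs play no role.\<close>

theorem proposition11:
  fixes \<mu> :: "'a::metric_space pmf"
    and lam \<gamma> \<Phi> \<Psi> :: real
    and g :: "'a \<Rightarrow> 'a \<Rightarrow> nat"
  assumes "lam > 0" and "\<gamma> \<ge> 1" and "\<Phi> > 0" and "\<Psi> > 0"
    and "\<And>x z. g x z \<in> {0, 1}"
    and "\<And>x z. dist x z \<le> lam \<Longrightarrow> g x z = 0"
    and "\<And>x z. dist x z > \<gamma> * lam \<Longrightarrow> g x z = 1"
    and "expanding lam \<Phi> \<Psi> \<mu>"
  shows "\<not> (\<exists>A B. (\<forall>x\<in>A. \<forall>z\<in>B. g x z = 1) \<and>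
              measure_pmf.prob \<mu> A \<ge> 1 / \<Phi> \<and>
              measure_pmf.prob \<mu> B \<ge> 1.01 / \<Psi>)"
proof
  assume "\<exists>A B. (\<forall>x\<in>A. \<forall>z\<in>B. g x z = 1) \<and>
              measure_pmf.prob \<mu> A \<ge> 1 / \<Phi> \<and>
              measure_pmf.prob \<mu> B \<ge> 1.01 / \<Psi>"
  then obtain A B where rectangle: "\<forall>x\<in>A. \<forall>z\<in>B. g x z = 1"
    and large_A: "measure_pmf.prob \<mu> A \<ge> 1 / \<Phi>"
    and large_B: "measure_pmf.prob \<mu> B \<ge> 1.01 / \<Psi>" by blast
  have "\<forall>x\<in>A. \<forall>z\<in>B. lam < dist x z"
    using rectangle assms(6) by (metis not_le zero_neq_one)
  then have "measure_pmf.prob \<mu> B \<le> 1 / \<Psi>"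
    using assms(8) large_A by (rule expanding_prob_far_set_le[rotated 2])
  moreover have "1 / \<Psi> < 1.01 / \<Psi>"
    using assms(4) by (simp add: field_simps)
  ultimately show False
    using large_B by linarith
qed

end
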